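(* Let $n\ge 4$, let $\mathcal C$ be a maximal independent set of the cycle $C_n$, and let $G$ be the $\mathcal C$-suspension of $C_n$. Then $G$ is pseudo-Gorenstein$^{*}$ if and only if one of the following holds: (a) $n\equiv 0,3\pmod{12}$ and $|\mathcal C|=\lceil n/3\rceil$; (b) $n\equiv 4,7,8,11\pmod{12}$ and $|\mathcal C|=\lfloor n/2\rfloor$; (c) $n\equiv 1,2,5,10\pmod{12}$ and $|\mathcal C|\ne\lfloor n/2\rfloor$.
   Context: For $\varnothing\ne C\subseteq V(G)$, the $C$-suspension of $G$ is obtained by adding a new vertex $z$ adjacent exactly to the vertices of $C$. $C_n$ is the cycle on $n$ vertices, with independence number $\lfloor n/2\rfloor$. For a finite simple graph $G$ on vertex set $[N]$, let $S=K[x_1,\dots,x_N]$ ($K$ a field) and $I(G)$ the edge ideal generated by $x_ix_j$, $\{i,j\}\in E(G)$. Let $\alpha(G)$ be the independence number (equal to $\dim S/I(G)$). Write the Hilbert series of $S/I(G)$ uniquely as $(h_0+\dots+h_st^s)/(1-t)^{\alpha(G)}$ with $h_s\ne 0$, and $\mathfrak a(G)=s-\alpha(G)$. $G$ is pseudo-Gorenstein$^{*}$ if $h_s=1$ and $\mathfrak a(G)=0$. *)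

theory Defs
  imports "HOL-Computational_Algebra.Computational_Algebra"
begin

text \<open>A finite simple graph is given by a vertex set V :: nat set and an edge set
  E :: nat set set (each edge a 2-element subset of V).\<close>

definition independent :: "nat set \<Rightarrow> nat set set \<Rightarrow> nat set \<Rightarrow> bool" where
  "independent V E A \<longleftrightarrow> A \<subseteq> V \<and> (\<forall>e\<in>E. \<not> e \<subseteq> A)"

definition maximal_independent :: "nat set \<Rightarrow> nat set set \<Rightarrow> nat set \<Rightarrow> bool" where
  "maximal_independent V E A \<longleftrightarrow> independent V E A \<and>
     (\<forall>B. independent V E B \<and> A \<subseteq> B \<longrightarrow> B = A)"

definition independence_number :: "nat set \<Rightarrow> nat set set \<Rightarrow> nat" where
  "independence_number V E = Max {card A | A. independent V E A}"

text \<open>Monomials of S = K[x_i : i \<in> V] are exponent vectors m :: nat \<Rightarrow> nat supported in V.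
  Since I(G) is a monomial ideal generated by the x_i x_j with {i,j} \<in> E, the degree-d
  component of S/I(G) has as K-basis the monomials of degree d not divisible by any
  generator x_i x_j, i.e. standard monomials.\<close>

definition standard_monomials :: "nat set \<Rightarrow> nat set set \<Rightarrow> nat \<Rightarrow> (nat \<Rightarrow> nat) set" where
  "standard_monomials V E d = {m. (\<forall>i. i \<notin> V \<longrightarrow> m i = 0) \<and> (\<Sum>i\<in>V. m i) = d \<and>
       (\<forall>e\<in>E. \<not> (\<forall>i\<in>e. m i > 0))}"

definition hilbert_function :: "nat set \<Rightarrow> nat set set \<Rightarrow> nat \<Rightarrow> nat" where
  "hilbert_function V E d = card (standard_monomials V E d)"

definition hilbert_series :: "nat set \<Rightarrow> nat set set \<Rightarrow> int fps" where
  "hilbert_series V E = Abs_fps (\<lambda>d. int (hilbert_function V E d))"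

definition pseudo_gorenstein_star :: "nat set \<Rightarrow> nat set set \<Rightarrow> bool" where
  "pseudo_gorenstein_star V E \<longleftrightarrow>
     (\<exists>h :: int poly. fps_of_poly h = hilbert_series V E * (1 - fps_X) ^ independence_number V E
        \<and> lead_coeff h = 1 \<and> degree h = independence_number V E)"

definition cycle_edges :: "nat \<Rightarrow> nat set set" where
  "cycle_edges n = {{i, (i + 1) mod n} | i. i < n}"

text \<open>C-suspension of C_n (vertices 0..n-1) with new vertex z = n.\<close>

definition suspension_edges :: "nat \<Rightarrow> nat set \<Rightarrow> nat set set" where
  "suspension_edges n C = cycle_edges n \<union> {{n, c} | c. c \<in> C}"

end

theory Submission
  imports Defs
begin

text \<open>Grouping the standard monomials by their support writes the Hilbert series of \<open>S/I(G)\<close>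
  as the sum of \<open>t^|F| / (1-t)^|F|\<close> over the independent sets \<open>F\<close> of \<open>G\<close>. Hence the
  h-polynomial is \<open>\<Sum>F t^|F| (1-t)^(\<alpha>-|F|)\<close>: its degree is at most \<open>\<alpha>\<close> and its coefficient of
  \<open>t^\<alpha>\<close> is \<open>(-1)^\<alpha> I(G;-1)\<close>, where \<open>I(G;-1) = \<Sum>F (-1)^|F|\<close>. So \<open>G\<close> is pseudo-Gorenstein*
  iff \<open>(-1)^\<alpha> I(G;-1) = 1\<close>.

  For the \<open>\<C>\<close>-suspension \<open>G\<close> of \<open>C_n\<close>, deleting the cone vertex gives
  \<open>I(G;-1) = I(C_n;-1) - I(C_n - \<C>;-1)\<close> and \<open>\<alpha>(G) = max \<lfloor>n/2\<rfloor> (|\<C>| + 1)\<close>. The vertex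
  recursion \<open>I(H;-1) = I(H - v;-1) - I(H - N[v];-1)\<close> makes \<open>I(C_n;-1)\<close> \<open>6\<close>-periodic in \<open>n\<close>.
  As \<open>\<C>\<close> is maximal, \<open>C_n - \<C>\<close> has \<open>|\<C>|\<close> components, each an edge or a single vertex; an
  isolated vertex forces \<open>I(C_n - \<C>;-1) = 0\<close>, and otherwise \<open>n = 3|\<C>|\<close> and the value is
  \<open>(-1)^|\<C>|\<close>. What remains is a sign check modulo \<open>12\<close>.\<close>

definition monomials_with_support :: "nat set \<Rightarrow> nat \<Rightarrow> (nat \<Rightarrow> nat) set" where
  "monomials_with_support F d = {m. (\<forall>i. 0 < m i \<longleftrightarrow> i \<in> F) \<and> sum m F = d}"

lemma finite_monomials_with_support:
  assumes "finite F"
  shows "finite (monomials_with_support F d)"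
proof (rule finite_subset)
  show "monomials_with_support F d \<subseteq> {m. \<forall>i. (i \<in> F \<longrightarrow> m i \<in> {0..d}) \<and> (i \<notin> F \<longrightarrow> m i = 0)}"
    using assms by (auto simp: monomials_with_support_def intro: member_le_sum)
  show "finite {m. \<forall>i. (i \<in> F \<longrightarrow> m i \<in> {0..d}) \<and> (i \<notin> F \<longrightarrow> m i = (0::nat))}"
    using assms by (intro finite_set_of_finite_funs) auto
qed

lemma monomials_with_support_insert:
  assumes "finite F" "a \<notin> F"
  shows "monomials_with_support (insert a F) d =
    (\<Union>i<d. (\<lambda>m. m(a := d - i)) ` monomials_with_support F i)"
proof (intro equalityI subsetI)
  fix m assume m: "m \<in> monomials_with_support (insert a F) d"
  define i where "i = sum m F"
  have "sum (m(a := 0)) F = i" unfolding i_def using assms by (intro sum.cong) auto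
  then have "m(a := 0) \<in> monomials_with_support F i"
    using m assms by (auto simp: monomials_with_support_def)
  moreover have "d = m a + i" "0 < m a"
    using m assms by (auto simp: monomials_with_support_def i_def)
  then have "m = (m(a := 0))(a := d - i)" "i < d" by auto
  ultimately show "m \<in> (\<Union>i<d. (\<lambda>m. m(a := d - i)) ` monomials_with_support F i)" by blast
next
  fix m' assume "m' \<in> (\<Union>i<d. (\<lambda>m. m(a := d - i)) ` monomials_with_support F i)"
  then obtain i m where i: "i < d" and m: "m \<in> monomials_with_support F i"
    and m': "m' = m(a := d - i)" by blast
  have "sum m' F = sum m F" unfolding m' using assms by (intro sum.cong) auto
  then show "m' \<in> monomials_with_support (insert a F) d"
    using assms i m unfolding m' by (auto simp: monomials_with_support_def)
qed

lemma card_monomials_with_support_insert: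
  assumes "finite F" "a \<notin> F"
  shows "card (monomials_with_support (insert a F) d) = (\<Sum>i<d. card (monomials_with_support F i))"
proof -
  let ?upd = "\<lambda>i m. m(a := d - i)"
  have inj: "inj_on (?upd i) (monomials_with_support F i)" for i
  proof (rule inj_onI)
    fix m m' assume "m \<in> monomials_with_support F i" "m' \<in> monomials_with_support F i"
      and eq: "m(a := d - i) = m'(a := d - i)"
    then have "m a = 0" "m' a = 0" using assms by (auto simp: monomials_with_support_def)
    with eq show "m = m'" by (metis fun_upd_triv fun_upd_upd)
  qed
  have "card (monomials_with_support (insert a F) d) =
      (\<Sum>i<d. card (?upd i ` monomials_with_support F i))"
    unfolding monomials_with_support_insert[OF assms]
  proof (rule card_UN_disjoint)
    show "\<forall>i\<in>{..<d}. finite (?upd i ` monomials_with_support F i)"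
      using finite_monomials_with_support[OF assms(1)] by blast
    show "\<forall>i\<in>{..<d}. \<forall>j\<in>{..<d}. i \<noteq> j \<longrightarrow>
        ?upd i ` monomials_with_support F i \<inter> ?upd j ` monomials_with_support F j = {}"
      by (auto dest: fun_cong[where x = a])
  qed simp
  also have "\<dots> = (\<Sum>i<d. card (monomials_with_support F i))"
    using inj by (simp add: card_image)
  finally show ?thesis .
qed

definition support_series :: "nat set \<Rightarrow> int fps" where
  "support_series F = Abs_fps (\<lambda>d. int (card (monomials_with_support F d)))"

lemma support_series_empty: "support_series {} = 1"
proof (rule fps_ext)
  fix d
  have "monomials_with_support {} d = (if d = 0 then {\<lambda>_. 0} else {})"
    by (auto simp: monomials_with_support_def)
  then show "support_series {} $ d = 1 $ d" by (simp add: support_series_def)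
qed

lemma support_series_insert:
  assumes "finite F" "a \<notin> F"
  shows "support_series (insert a F) * (1 - fps_X) = fps_X * support_series F"
proof (rule fps_ext)
  fix d
  have coeff: "support_series (insert a F) $ k = (\<Sum>i<k. support_series F $ i)" for k
    by (simp add: support_series_def card_monomials_with_support_insert[OF assms])
  have "support_series (insert a F) * (1 - fps_X) =
      support_series (insert a F) - fps_X * support_series (insert a F)"
    by (simp add: algebra_simps)
  then show "(support_series (insert a F) * (1 - fps_X)) $ d = (fps_X * support_series F) $ d"
    by (cases d) (simp_all add: coeff)
qed

lemma support_series_times_power:
  assumes "finite F"
  shows "support_series F * (1 - fps_X) ^ card F = fps_X ^ card F"
  using assms
proof (induction F rule: finite_induct)
  case empty
  then show ?case by (simp add: support_series_empty)
next
  case (insert a F)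
  have "support_series (insert a F) * (1 - fps_X) ^ card (insert a F) =
      (support_series (insert a F) * (1 - fps_X)) * (1 - fps_X) ^ card F"
    using insert by (simp add: mult.assoc mult.commute)
  also have "\<dots> = fps_X * (support_series F * (1 - fps_X) ^ card F)"
    using insert by (simp add: support_series_insert mult.assoc)
  finally show ?case using insert by simp
qed

definition indep_sets :: "nat set \<Rightarrow> nat set set \<Rightarrow> nat set set" where
  "indep_sets V E = {F. independent V E F}"

lemma mem_indep_sets [simp]: "F \<in> indep_sets V E \<longleftrightarrow> independent V E F"
  by (simp add: indep_sets_def)

lemma finite_indep_sets: "finite V \<Longrightarrow> finite (indep_sets V E)"
  by (rule finite_subset[of _ "Pow V"]) (auto simp: indep_sets_def independent_def)

lemma finite_independent: "finite V \<Longrightarrow> independent V E F \<Longrightarrow> finite F"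
  by (auto simp: independent_def intro: finite_subset)

lemma standard_monomials_eq_UN:
  assumes "finite V"
  shows "standard_monomials V E d = (\<Union>F\<in>indep_sets V E. monomials_with_support F d)"
proof (intro equalityI subsetI)
  fix m assume m: "m \<in> standard_monomials V E d"
  define F where "F = {i. 0 < m i}"
  have FV: "F \<subseteq> V" using m by (auto simp: F_def standard_monomials_def)
  have "independent V E F" using m FV unfolding independent_def standard_monomials_def F_def
    by blast
  moreover have "sum m F = sum m V"
    using FV assms by (intro sum.mono_neutral_left) (auto simp: F_def)
  then have "m \<in> monomials_with_support F d"
    using m by (auto simp: monomials_with_support_def F_def standard_monomials_def)
  ultimately show "m \<in> (\<Union>F\<in>indep_sets V E. monomials_with_support F d)"
    by auto
next
  fix m assume "m \<in> (\<Union>F\<in>indep_sets V E. monomials_with_support F d)"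
  then obtain F where F: "independent V E F" and m: "m \<in> monomials_with_support F d"
    by auto
  have FV: "F \<subseteq> V" using F by (simp add: independent_def)
  have "sum m F = sum m V"
    using FV assms m by (intro sum.mono_neutral_left) (auto simp: monomials_with_support_def)
  moreover have "\<not> (\<forall>i\<in>e. m i > 0)" if "e \<in> E" for e
    using F m that by (auto simp: independent_def monomials_with_support_def subset_eq)
  ultimately show "m \<in> standard_monomials V E d"
    using m FV by (auto simp: monomials_with_support_def standard_monomials_def)
qed

lemma hilbert_series_eq_sum_support_series:
  assumes "finite V"
  shows "hilbert_series V E = (\<Sum>F\<in>indep_sets V E. support_series F)"
proof (rule fps_ext)
  fix d
  have "hilbert_function V E d = (\<Sum>F\<in>indep_sets V E. card (monomials_with_support F d))"
    unfolding hilbert_function_def standard_monomials_eq_UN[OF assms]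
  proof (rule card_UN_disjoint)
    show "finite (indep_sets V E)" using assms by (rule finite_indep_sets)
    show "\<forall>F\<in>indep_sets V E. finite (monomials_with_support F d)"
      by (auto intro!: finite_monomials_with_support finite_independent[OF assms])
    show "\<forall>F\<in>indep_sets V E. \<forall>F'\<in>indep_sets V E. F \<noteq> F' \<longrightarrow>
        monomials_with_support F d \<inter> monomials_with_support F' d = {}"
      by (auto simp: monomials_with_support_def)
  qed
  then show "hilbert_series V E $ d = (\<Sum>F\<in>indep_sets V E. support_series F) $ d"
    by (simp add: hilbert_series_def support_series_def fps_sum_nth)
qed

lemma independence_number_eq_Max: "independence_number V E = Max (card ` indep_sets V E)"
  unfolding independence_number_def indep_sets_def by (rule arg_cong[where f = Max]) blast

lemma card_le_independence_number:
  assumes "finite V" "independent V E F"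
  shows "card F \<le> independence_number V E"
  using assms by (auto simp: independence_number_eq_Max finite_indep_sets)

lemma independence_number_eqI:
  assumes "finite V" "independent V E A" "card A = k" "\<And>B. independent V E B \<Longrightarrow> card B \<le> k"
  shows "independence_number V E = k"
  unfolding independence_number_eq_Max using assms
  by (intro Max_eqI) (auto simp: finite_indep_sets)

lemma independence_number_attained:
  assumes "finite V" "{} \<notin> E"
  obtains A where "independent V E A" "card A = independence_number V E"
proof -
  have "independent V E {}" using assms(2) by (auto simp: independent_def)
  then have "independence_number V E \<in> card ` indep_sets V E"
    unfolding independence_number_eq_Max using finite_indep_sets[OF assms(1)]
    by (intro Max_in) auto
  then show ?thesis using that by auto
qed

definition indep_alt_sum :: "nat set \<Rightarrow> nat set set \<Rightarrow> int" where
  "indep_alt_sum V E = (\<Sum>F\<in>indep_sets V E. (-1) ^ card F)"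

definition h_polynomial :: "nat set \<Rightarrow> nat set set \<Rightarrow> int poly" where
  "h_polynomial V E =
    (\<Sum>F\<in>indep_sets V E. monom 1 (card F) * [:1, -1:] ^ (independence_number V E - card F))"

lemma fps_of_poly_one_minus_X: "fps_of_poly [:1, -1::int:] = 1 - fps_X"
  by (rule fps_ext) (auto simp: coeff_pCons split: nat.split)

lemma hilbert_series_times_power_eq_h_polynomial:
  assumes "finite V"
  shows "hilbert_series V E * (1 - fps_X) ^ independence_number V E = fps_of_poly (h_polynomial V E)"
proof -
  let ?\<alpha> = "independence_number V E"
  have "support_series F * (1 - fps_X) ^ ?\<alpha> = fps_X ^ card F * (1 - fps_X) ^ (?\<alpha> - card F)"
    if "F \<in> indep_sets V E" for F
  proof -
    have "card F \<le> ?\<alpha>" "finite F"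
      using that assms card_le_independence_number finite_independent by auto
    then have "support_series F * (1 - fps_X) ^ ?\<alpha> =
        (support_series F * (1 - fps_X) ^ card F) * (1 - fps_X) ^ (?\<alpha> - card F)"
      by (simp flip: power_add add: mult.assoc)
    then show ?thesis by (simp add: support_series_times_power \<open>finite F\<close>)
  qed
  then have "hilbert_series V E * (1 - fps_X) ^ ?\<alpha> =
      (\<Sum>F\<in>indep_sets V E. fps_X ^ card F * (1 - fps_X) ^ (?\<alpha> - card F))"
    by (simp add: hilbert_series_eq_sum_support_series[OF assms] sum_distrib_right)
  also have "\<dots> = fps_of_poly (h_polynomial V E)"
    by (simp add: h_polynomial_def fps_of_poly_sum fps_of_poly_mult fps_of_poly_power
        fps_of_poly_monom' fps_of_poly_one_minus_X)
  finally show ?thesis .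
qed

lemma degree_h_polynomial_le:
  assumes "finite V"
  shows "degree (h_polynomial V E) \<le> independence_number V E"
  unfolding h_polynomial_def
proof (rule degree_sum_le)
  fix F assume "F \<in> indep_sets V E"
  then have "card F \<le> independence_number V E"
    using assms card_le_independence_number by auto
  moreover have "degree (monom (1::int) (card F) * [:1, -1:] ^ (independence_number V E - card F))
      \<le> card F + (independence_number V E - card F)"
    by (rule order.trans[OF degree_mult_le]) (simp add: degree_monom_eq degree_power_eq)
  ultimately show "degree (monom (1::int) (card F) * [:1, -1:] ^ (independence_number V E - card F))
      \<le> independence_number V E" by simp
qed (simp add: finite_indep_sets assms)

lemma coeff_h_polynomial_independence_number:
  assumes "finite V"
  shows "coeff (h_polynomial V E) (independence_number V E) =
    (-1) ^ independence_number V E * indep_alt_sum V E"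
proof -
  let ?\<alpha> = "independence_number V E"
  have "coeff (monom 1 (card F) * [:1, -1::int:] ^ (?\<alpha> - card F)) ?\<alpha> = (-1) ^ ?\<alpha> * (-1) ^ card F"
    if "F \<in> indep_sets V E" for F
  proof -
    have le: "card F \<le> ?\<alpha>"
      using that assms card_le_independence_number by auto
    have pow: "coeff ([:1, -1::int:] ^ j) j = (-1) ^ j" for j
      using lead_coeff_power[of "[:1, -1::int:]" j] by (simp add: degree_power_eq)
    have "coeff (monom 1 (card F) * [:1, -1::int:] ^ (?\<alpha> - card F)) ?\<alpha> = (-1) ^ (?\<alpha> - card F)"
      using le pow[of "?\<alpha> - card F"] by (simp add: coeff_monom_mult)
    also have "\<dots> = (-1) ^ (?\<alpha> + card F)"
      using le by (simp add: neg_one_power_add_eq_neg_one_power_diff)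
    finally show ?thesis by (simp add: power_add)
  qed
  then show ?thesis
    by (simp add: h_polynomial_def indep_alt_sum_def coeff_sum sum_distrib_left)
qed

lemma pseudo_gorenstein_star_iff_indep_alt_sum:
  assumes "finite V"
  shows "pseudo_gorenstein_star V E \<longleftrightarrow>
    (-1) ^ independence_number V E * indep_alt_sum V E = 1"
proof -
  let ?h = "h_polynomial V E" and ?\<alpha> = "independence_number V E"
  have "pseudo_gorenstein_star V E \<longleftrightarrow> lead_coeff ?h = 1 \<and> degree ?h = ?\<alpha>"
    unfolding pseudo_gorenstein_star_def hilbert_series_times_power_eq_h_polynomial[OF assms]
      fps_of_poly_eq_iff by blast
  also have "\<dots> \<longleftrightarrow> coeff ?h ?\<alpha> = 1"
  proof
    assume "coeff ?h ?\<alpha> = 1"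
    moreover have "?\<alpha> \<le> degree ?h" using calculation by (intro le_degree) simp
    then have "degree ?h = ?\<alpha>" using degree_h_polynomial_le[OF assms, of E] by linarith
    ultimately show "lead_coeff ?h = 1 \<and> degree ?h = ?\<alpha>" by simp
  qed metis
  finally show ?thesis by (simp add: coeff_h_polynomial_independence_number[OF assms])
qed

definition neighbours :: "nat set set \<Rightarrow> nat \<Rightarrow> nat set" where
  "neighbours E v = {u. {u, v} \<in> E}"

lemma independent_insert_iff:
  assumes "\<forall>e\<in>E. card e = 2" "v \<notin> F"
  shows "independent W E (insert v F) \<longleftrightarrow>
    v \<in> W \<and> independent (W - insert v (neighbours E v)) E F"
proof -
  have "(\<exists>e\<in>E. e \<subseteq> insert v F) \<longleftrightarrow> (\<exists>e\<in>E. e \<subseteq> F) \<or> F \<inter> neighbours E v \<noteq> {}"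
  proof
    assume "\<exists>e\<in>E. e \<subseteq> insert v F"
    then obtain e where e: "e \<in> E" "e \<subseteq> insert v F" by blast
    show "(\<exists>e\<in>E. e \<subseteq> F) \<or> F \<inter> neighbours E v \<noteq> {}"
    proof (cases "v \<in> e")
      case True
      from e(1) obtain x y where "e = {x, y}" "x \<noteq> y" using assms(1) by (auto simp: card_2_iff)
      with True obtain u where "e = {u, v}" "u \<noteq> v" by auto
      with e show ?thesis by (auto simp: neighbours_def)
    next
      case False
      with e show ?thesis by auto
    qed
  next
    assume "(\<exists>e\<in>E. e \<subseteq> F) \<or> F \<inter> neighbours E v \<noteq> {}"
    then show "\<exists>e\<in>E. e \<subseteq> insert v F"
    proof
      assume "\<exists>e\<in>E. e \<subseteq> F"
      then show ?thesis by blast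
    next
      assume "F \<inter> neighbours E v \<noteq> {}"
      then obtain u where "u \<in> F" "{u, v} \<in> E" by (auto simp: neighbours_def)
      then show ?thesis by (intro bexI[of _ "{u, v}"]) auto
    qed
  qed
  moreover have "F \<subseteq> W - insert v (neighbours E v) \<longleftrightarrow> F \<subseteq> W \<and> F \<inter> neighbours E v = {}"
    using assms(2) by blast
  ultimately show ?thesis unfolding independent_def by blast
qed

lemma indep_sets_split:
  assumes "v \<in> W" "\<forall>e\<in>E. card e = 2"
  shows "indep_sets W E =
    indep_sets (W - {v}) E \<union> insert v ` indep_sets (W - insert v (neighbours E v)) E"
proof (intro equalityI subsetI)
  fix F assume F: "F \<in> indep_sets W E"
  show "F \<in> indep_sets (W - {v}) E \<union> insert v ` indep_sets (W - insert v (neighbours E v)) E"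
  proof (cases "v \<in> F")
    case True
    then have "F = insert v (F - {v})" by auto
    with F have "F - {v} \<in> indep_sets (W - insert v (neighbours E v)) E"
      using independent_insert_iff[OF assms(2), of v "F - {v}" W] by simp
    with \<open>F = insert v (F - {v})\<close> show ?thesis by blast
  next
    case False
    with F show ?thesis by (auto simp: independent_def)
  qed
next
  fix F assume "F \<in> indep_sets (W - {v}) E \<union> insert v ` indep_sets (W - insert v (neighbours E v)) E"
  then consider "F \<in> indep_sets (W - {v}) E"
    | G where "G \<in> indep_sets (W - insert v (neighbours E v)) E" "F = insert v G" by blast
  then show "F \<in> indep_sets W E"
  proof cases
    case 1
    then show ?thesis by (auto simp: independent_def)
  next
    case 2
    then have "v \<notin> G" by (auto simp: independent_def)
    with 2 show ?thesis using independent_insert_iff[OF assms(2)] assms(1) by simp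
  qed
qed

lemma indep_alt_sum_vertex_rec:
  assumes "finite W" "v \<in> W" "\<forall>e\<in>E. card e = 2"
  shows "indep_alt_sum W E =
    indep_alt_sum (W - {v}) E - indep_alt_sum (W - insert v (neighbours E v)) E"
proof -
  let ?A = "indep_sets (W - {v}) E" and ?B = "indep_sets (W - insert v (neighbours E v)) E"
  have finite: "finite ?A" "finite ?B" using assms(1) by (auto intro: finite_indep_sets)
  have "?A \<inter> insert v ` ?B = {}" by (auto simp: independent_def)
  then have "indep_alt_sum W E = indep_alt_sum (W - {v}) E + (\<Sum>F\<in>insert v ` ?B. (-1) ^ card F)"
    unfolding indep_alt_sum_def indep_sets_split[OF assms(2,3)] using finite
    by (intro sum.union_disjoint) auto
  moreover have "inj_on (insert v) ?B"
    by (rule inj_onI) (auto simp: independent_def insert_ident)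
  moreover have "(\<Sum>F\<in>?B. (-1::int) ^ card (insert v F)) =
      - indep_alt_sum (W - insert v (neighbours E v)) E"
  proof -
    have "card (insert v F) = Suc (card F)" if "F \<in> ?B" for F
    proof -
      have "finite F" "v \<notin> F"
        using that assms(1) finite_independent[of "W - insert v (neighbours E v)" E F]
        by (auto simp: independent_def)
      then show ?thesis by simp
    qed
    then show ?thesis unfolding indep_alt_sum_def sum_negf[symmetric] by (intro sum.cong) auto
  qed
  ultimately show ?thesis by (simp add: sum.reindex)
qed

lemma indep_alt_sum_empty:
  assumes "\<forall>e\<in>E. card e = 2"
  shows "indep_alt_sum {} E = 1"
proof -
  have "indep_sets {} E = {{}}" using assms by (force simp: independent_def)
  then show ?thesis by (simp add: indep_alt_sum_def)
qed

lemma indep_alt_sum_isolated_vertex: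
  assumes "finite W" "v \<in> W" "\<forall>e\<in>E. card e = 2" "\<forall>u\<in>W. {u, v} \<notin> E"
  shows "indep_alt_sum W E = 0"
proof -
  have "W - insert v (neighbours E v) = W - {v}" using assms(4) by (auto simp: neighbours_def)
  then show ?thesis using indep_alt_sum_vertex_rec[OF assms(1-3)] by simp
qed

definition induced_perfect_matching :: "nat set \<Rightarrow> nat set set \<Rightarrow> bool" where
  "induced_perfect_matching W E \<longleftrightarrow> (\<forall>v\<in>W. \<exists>!u. u \<in> W \<and> {u, v} \<in> E)"

lemma induced_perfect_matching_unique:
  assumes "induced_perfect_matching W E" "{u, v} \<in> E" "u \<in> W" "v \<in> W" "x \<in> W" "{x, v} \<in> E"
  shows "x = u"
  using assms unfolding induced_perfect_matching_def by blast

lemma induced_perfect_matching_Diff: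
  assumes matching: "induced_perfect_matching W E" and uv: "{u, v} \<in> E" "u \<in> W" "v \<in> W"
  shows "induced_perfect_matching (W - {u, v}) E"
  unfolding induced_perfect_matching_def
proof
  fix x assume x: "x \<in> W - {u, v}"
  then obtain y where y: "y \<in> W" "{y, x} \<in> E"
    and unique: "\<And>y'. y' \<in> W \<Longrightarrow> {y', x} \<in> E \<Longrightarrow> y' = y"
    using matching unfolding induced_perfect_matching_def by blast
  have "{x, y} \<in> E" "{v, u} \<in> E" using y(2) uv(1) by (simp_all add: insert_commute)
  then have "y \<noteq> u" "y \<noteq> v"
    using x y(1) uv induced_perfect_matching_unique[OF matching] by blast+
  with y unique show "\<exists>!y. y \<in> W - {u, v} \<and> {y, x} \<in> E" by blast
qed

lemma indep_alt_sum_perfect_matching: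
  assumes "finite W" "\<forall>e\<in>E. card e = 2" "induced_perfect_matching W E"
  shows "indep_alt_sum W E = (-1) ^ (card W div 2)"
  using assms
proof (induction "card W" arbitrary: W rule: less_induct)
  case less
  note finite = less.prems(1) and simple = less.prems(2) and matching = less.prems(3)
  show ?case
  proof (cases "W = {}")
    case True
    then show ?thesis using indep_alt_sum_empty simple by simp
  next
    case False
    then obtain v where v: "v \<in> W" by auto
    then obtain u where u: "u \<in> W" "{u, v} \<in> E"
      using matching unfolding induced_perfect_matching_def by blast
    have "u \<noteq> v" using simple u by force
    (* Deleting v isolates its partner u, and the closed neighbourhood of v is {u, v}. *)
    have "{v, u} \<in> E" using u(2) by (simp add: insert_commute)
    then have "\<forall>x\<in>W - {v}. {x, u} \<notin> E"
      using induced_perfect_matching_unique[OF matching _ v u(1)] by blast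
    then have isolated: "indep_alt_sum (W - {v}) E = 0"
      using finite u \<open>u \<noteq> v\<close> simple by (intro indep_alt_sum_isolated_vertex[of _ u]) auto
    have closed_nbhd: "W - insert v (neighbours E v) = W - {u, v}"
      using induced_perfect_matching_unique[OF matching u(2,1) v] u unfolding neighbours_def by blast
    have uv: "{u, v} \<subseteq> W" "card {u, v} = 2" using u v \<open>u \<noteq> v\<close> by auto
    have card: "card (W - {u, v}) = card W - 2" "2 \<le> card W"
      using card_Diff_subset[OF _ uv(1)] card_mono[OF finite uv(1)] uv(2) by auto
    have "indep_alt_sum (W - {u, v}) E = (-1) ^ (card (W - {u, v}) div 2)"
      using card finite simple induced_perfect_matching_Diff[OF matching u(2,1) v]
      by (intro less.hyps) auto
    moreover have "card W div 2 = Suc ((card W - 2) div 2)" using card by presburger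
    ultimately show ?thesis
      using indep_alt_sum_vertex_rec[OF finite v simple] isolated closed_nbhd card by simp
  qed
qed

lemma ball_cone_edges_iff:
  "(\<forall>e\<in>E \<union> {{z, c} | c. c \<in> C}. P e) \<longleftrightarrow> (\<forall>e\<in>E. P e) \<and> (\<forall>c\<in>C. P {z, c})"
  by blast

lemma independent_cone_edges_iff:
  assumes "z \<notin> W"
  shows "independent W (E \<union> {{z, c} | c. c \<in> C}) F \<longleftrightarrow> independent W E F"
  using assms by (auto simp: independent_def ball_cone_edges_iff)

lemma independent_cone_iff:
  assumes "z \<notin> V" "C \<subseteq> V" "\<forall>e\<in>E. e \<subseteq> V"
  shows "independent (insert z V) (E \<union> {{z, c} | c. c \<in> C}) F \<longleftrightarrow>
    (if z \<in> F then independent (V - C) E (F - {z}) else independent V E F)"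
proof (cases "z \<in> F")
  case True
  have "e \<subseteq> F \<longleftrightarrow> e \<subseteq> F - {z}" if "e \<in> E" for e
    using assms(1,3) that by blast
  moreover have "{z, c} \<subseteq> F \<longleftrightarrow> c \<in> F - {z}" if "c \<in> C" for c
    using True assms(1,2) that by auto
  ultimately show ?thesis
    using True assms(1,2) unfolding independent_def ball_cone_edges_iff by auto
next
  case False
  then show ?thesis unfolding independent_def ball_cone_edges_iff by auto
qed

lemma independence_number_cone:
  assumes "finite V" "z \<notin> V" "C \<subseteq> V" "\<forall>e\<in>E. card e = 2 \<and> e \<subseteq> V"
  shows "independence_number (insert z V) (E \<union> {{z, c} | c. c \<in> C}) =
    max (independence_number V E) (independence_number (V - C) E + 1)"
proof -
  let ?E = "E \<union> {{z, c} | c. c \<in> C}"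
  have cone_iff: "independent (insert z V) ?E F \<longleftrightarrow>
      (if z \<in> F then independent (V - C) E (F - {z}) else independent V E F)" for F
    using assms(4) by (intro independent_cone_iff assms(2,3)) blast
  have "{} \<notin> E" using assms(4) by force
  then obtain A B where A: "independent V E A" "card A = independence_number V E"
    and B: "independent (V - C) E B" "card B = independence_number (V - C) E"
    using independence_number_attained assms(1) by (metis finite_Diff)
  have "z \<notin> A" "z \<notin> B" "finite B"
    using A(1) B(1) assms(1,2) finite_independent[OF _ B(1)] by (auto simp: independent_def)
  show ?thesis
  proof (rule independence_number_eqI)
    fix F assume F: "independent (insert z V) ?E F"
    show "card F \<le> max (independence_number V E) (independence_number (V - C) E + 1)"
    proof (cases "z \<in> F")
      case True
      then have "card (F - {z}) \<le> independence_number (V - C) E"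
        using F cone_iff card_le_independence_number[of "V - C" E "F - {z}"] assms(1) by simp
      moreover have "card F = card (F - {z}) + 1"
        using card_Suc_Diff1[OF finite_independent[OF _ F] True] assms(1) by simp
      ultimately show ?thesis by simp
    next
      case False
      then have "independent V E F" using F cone_iff by simp
      then show ?thesis using card_le_independence_number[OF assms(1)] by (simp add: le_max_iff_disj)
    qed
  next
    let ?M = "if independence_number V E \<le> independence_number (V - C) E + 1 then insert z B else A"
    show "independent (insert z V) ?E ?M"
      using A(1) B(1) \<open>z \<notin> A\<close> \<open>z \<notin> B\<close> cone_iff by simp
    show "card ?M = max (independence_number V E) (independence_number (V - C) E + 1)"
      using A(2) B(2) \<open>z \<notin> B\<close> \<open>finite B\<close> by simp
  qed (use assms(1) in simp)
qed

lemma indep_alt_sum_cone: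
  assumes "finite V" "z \<notin> V" "C \<subseteq> V" "\<forall>e\<in>E. card e = 2 \<and> e \<subseteq> V"
  shows "indep_alt_sum (insert z V) (E \<union> {{z, c} | c. c \<in> C}) =
    indep_alt_sum V E - indep_alt_sum (V - C) E"
proof -
  let ?E = "E \<union> {{z, c} | c. c \<in> C}"
  have "\<forall>e\<in>?E. card e = 2" using assms(2-4) by (auto simp: card_insert_if)
  moreover have "neighbours ?E z = C" using assms(2-4) by (auto simp: neighbours_def doubleton_eq_iff)
  ultimately have "indep_alt_sum (insert z V) ?E = indep_alt_sum V ?E - indep_alt_sum (V - C) ?E"
    using indep_alt_sum_vertex_rec[of "insert z V" z ?E] assms(1,2) by simp
  moreover have "indep_sets W ?E = indep_sets W E" if "z \<notin> W" for W
    using independent_cone_edges_iff[OF that] by (auto simp: indep_sets_def)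
  ultimately show ?thesis using assms(2) by (simp add: indep_alt_sum_def)
qed

definition cyc_next :: "nat \<Rightarrow> nat \<Rightarrow> nat" where
  "cyc_next n i = (if Suc i = n then 0 else Suc i)"

definition cyc_prev :: "nat \<Rightarrow> nat \<Rightarrow> nat" where
  "cyc_prev n i = (if i = 0 then n - 1 else i - 1)"

lemma cyc_next_less: "i < n \<Longrightarrow> cyc_next n i < n"
  by (auto simp: cyc_next_def)

lemma cyc_prev_less: "i < n \<Longrightarrow> cyc_prev n i < n"
  by (auto simp: cyc_prev_def)

lemma cyc_prev_next [simp]: "i < n \<Longrightarrow> cyc_prev n (cyc_next n i) = i"
  by (auto simp: cyc_next_def cyc_prev_def)

lemma cyc_next_prev [simp]: "i < n \<Longrightarrow> cyc_next n (cyc_prev n i) = i"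
  by (auto simp: cyc_next_def cyc_prev_def)

lemma cyc_next_neq: "2 \<le> n \<Longrightarrow> cyc_next n i \<noteq> i"
  by (auto simp: cyc_next_def)

lemma cyc_next_inj: "i < n \<Longrightarrow> j < n \<Longrightarrow> cyc_next n i = cyc_next n j \<Longrightarrow> i = j"
  by (metis cyc_prev_next)

lemma inj_on_cyc_next: "A \<subseteq> {0..<n} \<Longrightarrow> inj_on (cyc_next n) A"
  by (rule inj_onI) (metis atLeastLessThan_iff cyc_next_inj subsetD)

lemma cyc_next_eq_mod: "i < n \<Longrightarrow> cyc_next n i = (i + 1) mod n"
  by (auto simp: cyc_next_def)

lemma cycle_edges_eq: "cycle_edges n = {{i, cyc_next n i} | i. i < n}"
  unfolding cycle_edges_def by (intro Collect_cong ex_cong1) (auto simp: cyc_next_eq_mod)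

lemma cycle_edge_next: "i < n \<Longrightarrow> {i, cyc_next n i} \<in> cycle_edges n"
  by (auto simp: cycle_edges_eq)

lemma cycle_edge_iff:
  "{u, v} \<in> cycle_edges n \<longleftrightarrow> u < n \<and> v < n \<and> (u = cyc_next n v \<or> u = cyc_prev n v)"
proof
  assume "{u, v} \<in> cycle_edges n"
  then obtain i where "i < n" "{u, v} = {i, cyc_next n i}" by (auto simp: cycle_edges_eq)
  then show "u < n \<and> v < n \<and> (u = cyc_next n v \<or> u = cyc_prev n v)"
    by (auto simp: doubleton_eq_iff cyc_next_less)
next
  assume "u < n \<and> v < n \<and> (u = cyc_next n v \<or> u = cyc_prev n v)"
  then have "{u, v} = {v, cyc_next n v} \<and> v < n \<or> {u, v} = {u, cyc_next n u} \<and> u < n"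
    by auto
  then show "{u, v} \<in> cycle_edges n" unfolding cycle_edges_eq by blast
qed

lemma card_cycle_edges: "2 \<le> n \<Longrightarrow> \<forall>e\<in>cycle_edges n. card e = 2"
  by (auto simp: cycle_edges_eq cyc_next_neq[symmetric])

lemma cycle_edges_subset: "e \<in> cycle_edges n \<Longrightarrow> e \<subseteq> {0..<n}"
  by (auto simp: cycle_edges_eq cyc_next_less)

lemma neighbours_cycle: "v < n \<Longrightarrow> neighbours (cycle_edges n) v = {cyc_next n v, cyc_prev n v}"
  by (auto simp: neighbours_def cycle_edge_iff cyc_next_less cyc_prev_less)

fun path_alt_sum :: "nat \<Rightarrow> int" where
  "path_alt_sum 0 = 1"
| "path_alt_sum (Suc 0) = 0"
| "path_alt_sum (Suc (Suc m)) = path_alt_sum (Suc m) - path_alt_sum m"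

lemma path_alt_sum_mod_6: "path_alt_sum m = [1, 0, -1, -1, 0, 1] ! (m mod 6)"
proof (induction m rule: path_alt_sum.induct)
  case (3 m)
  have "m mod 6 < 6" by simp
  then have "m mod 6 \<in> {0, 1, 2, 3, 4, 5}" by auto
  then show ?case using 3 by (auto simp: mod_Suc)
qed simp_all

definition cycle_alt_sum :: "nat \<Rightarrow> int" where
  "cycle_alt_sum n = [2, 1, -1, -2, -1, 1] ! (n mod 6)"

lemma indep_alt_sum_cycle_path:
  assumes "2 \<le> n" "a + m < n"
  shows "indep_alt_sum {a..<a + m} (cycle_edges n) = path_alt_sum m"
  using assms(2)
proof (induction m rule: path_alt_sum.induct)
  case 1
  then show ?case using indep_alt_sum_empty card_cycle_edges[OF assms(1)] by simp
next
  case 2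
  have "{a, a} \<notin> cycle_edges n" using card_cycle_edges[OF assms(1)] by force
  then show ?case
    using indep_alt_sum_isolated_vertex[of "{a}" a] card_cycle_edges[OF assms(1)] by simp
next
  case (3 m)
  let ?v = "a + Suc m"
  have "neighbours (cycle_edges n) ?v = {Suc ?v, a + m}"
    using 3 by (simp add: neighbours_cycle cyc_next_def cyc_prev_def)
  moreover have "{a..<a + Suc (Suc m)} - {?v} = {a..<a + Suc m}"
    "{a..<a + Suc (Suc m)} - {?v, Suc ?v, a + m} = {a..<a + m}" by auto
  ultimately show ?case
    using indep_alt_sum_vertex_rec[of "{a..<a + Suc (Suc m)}" ?v] card_cycle_edges[OF assms(1)] 3
    by simp
qed

lemma indep_alt_sum_cycle:
  assumes "3 \<le> n"
  shows "indep_alt_sum {0..<n} (cycle_edges n) = cycle_alt_sum n"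
proof -
  define m where "m = n - 3"
  then have n: "n = Suc (Suc (Suc m))" using assms by simp
  (* Delete the vertex m + 2 = n - 1: what remains are paths on n - 1 and on n - 3 vertices. *)
  have "neighbours (cycle_edges n) (m + 2) = {0, m + 1}"
    using n by (simp add: neighbours_cycle cyc_next_def cyc_prev_def)
  moreover have "{0..<n} - {m + 2} = {0..<0 + Suc (Suc m)}" "{0..<n} - {m + 2, 0, m + 1} = {1..<1 + m}"
    using n by auto
  ultimately have "indep_alt_sum {0..<n} (cycle_edges n) = path_alt_sum (Suc (Suc m)) - path_alt_sum m"
    using indep_alt_sum_vertex_rec[of "{0..<n}" "m + 2"] card_cycle_edges[of n]
      indep_alt_sum_cycle_path[of n 0 "Suc (Suc m)"] indep_alt_sum_cycle_path[of n 1 m] n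
    by simp
  also have "\<dots> = cycle_alt_sum n"
  proof -
    have "m mod 6 < 6" by simp
    then have "m mod 6 \<in> {0, 1, 2, 3, 4, 5}" by auto
    then show ?thesis unfolding n path_alt_sum_mod_6 cycle_alt_sum_def by (auto simp: mod_Suc)
  qed
  finally show ?thesis .
qed

lemma two_card_le_of_independent_cycle:
  assumes "independent {0..<n} (cycle_edges n) F"
  shows "2 * card F \<le> n"
proof -
  have F: "F \<subseteq> {0..<n}" using assms by (simp add: independent_def)
  have "F \<inter> cyc_next n ` F = {}"
  proof (rule ccontr)
    assume "F \<inter> cyc_next n ` F \<noteq> {}"
    then obtain x where "x \<in> F" "cyc_next n x \<in> F" by auto
    moreover have "{x, cyc_next n x} \<in> cycle_edges n" using F \<open>x \<in> F\<close> by (intro cycle_edge_next) auto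
    ultimately show False using assms by (auto simp: independent_def)
  qed
  then have "card (F \<union> cyc_next n ` F) = 2 * card F"
    using F finite_subset[OF F] by (simp add: card_Un_disjoint card_image inj_on_cyc_next)
  moreover have "cyc_next n x < n" if "x \<in> F" for x using F that by (intro cyc_next_less) auto
  then have "F \<union> cyc_next n ` F \<subseteq> {0..<n}" using F by auto
  ultimately show ?thesis using card_mono[of "{0..<n}" "F \<union> cyc_next n ` F"] by simp
qed

lemma independent_cycle_evens:
  "independent {0..<n} (cycle_edges n) ((\<lambda>i. 2 * i) ` {..<n div 2})"
  unfolding independent_def
proof (intro conjI ballI notI)
  show "(\<lambda>i. 2 * i) ` {..<n div 2} \<subseteq> {0..<n}" by auto
  fix e assume e: "e \<in> cycle_edges n" "e \<subseteq> (\<lambda>i. 2 * i) ` {..<n div 2}"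
  then obtain j where j: "j < n" "e = {j, cyc_next n j}" by (auto simp: cycle_edges_eq)
  with e(2) obtain i where "i < n div 2" "j = 2 * i" by auto
  then have "cyc_next n j = Suc j" by (simp add: cyc_next_def)
  with e(2) j obtain i' where "Suc j = 2 * i'" by auto
  with \<open>j = 2 * i\<close> show False by presburger
qed

lemma independence_number_cycle: "independence_number {0..<n} (cycle_edges n) = n div 2"
proof (rule independence_number_eqI)
  fix B assume "independent {0..<n} (cycle_edges n) B"
  then have "2 * card B \<le> n" by (rule two_card_le_of_independent_cycle)
  then show "card B \<le> n div 2" by presburger
qed (auto intro: independent_cycle_evens simp: card_image inj_on_def)

locale cycle_maximal_independent =
  fixes n :: nat and C :: "nat set"
  assumes three_le: "3 \<le> n"
    and maximal: "maximal_independent {0..<n} (cycle_edges n) C"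
begin

lemma simple_cycle: "\<forall>e\<in>cycle_edges n. card e = 2"
  using three_le by (intro card_cycle_edges) simp

lemma independent_C: "independent {0..<n} (cycle_edges n) C"
  using maximal by (simp add: maximal_independent_def)

lemma C_subset: "C \<subseteq> {0..<n}"
  using independent_C by (simp add: independent_def)

lemma finite_C: "finite C"
  using C_subset finite_subset by blast

lemma cyc_next_C_less: "c \<in> C \<Longrightarrow> cyc_next n c < n"
  using C_subset cyc_next_less by auto

lemma card_C_le: "card C \<le> n div 2"
  using card_le_independence_number[OF _ independent_C] by (simp add: independence_number_cycle)

lemma cyc_next_notin_C: "c \<in> C \<Longrightarrow> cyc_next n c \<notin> C"
proof
  assume "c \<in> C" "cyc_next n c \<in> C"
  moreover have "{c, cyc_next n c} \<in> cycle_edges n"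
    using \<open>c \<in> C\<close> C_subset by (intro cycle_edge_next) auto
  ultimately show False using independent_C by (auto simp: independent_def)
qed

lemma cyc_next_or_prev_in_C:
  assumes "w < n" "w \<notin> C"
  shows "cyc_next n w \<in> C \<or> cyc_prev n w \<in> C"
proof (rule ccontr)
  assume "\<not> (cyc_next n w \<in> C \<or> cyc_prev n w \<in> C)"
  then have "C \<subseteq> {0..<n} - insert w (neighbours (cycle_edges n) w)"
    using C_subset assms by (auto simp: neighbours_cycle)
  moreover have "independent {0..<n} (cycle_edges n) (insert w C) \<longleftrightarrow>
      w \<in> {0..<n} \<and> independent ({0..<n} - insert w (neighbours (cycle_edges n) w)) (cycle_edges n) C"
    using simple_cycle assms(2) by (rule independent_insert_iff)
  ultimately have "independent {0..<n} (cycle_edges n) (insert w C)"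
    using independent_C assms(1) by (simp add: independent_def)
  then have "insert w C = C" using maximal by (auto simp: maximal_independent_def)
  with assms(2) show False by blast
qed

lemma complement_near_C:
  assumes "w < n" "w \<notin> C"
  obtains c where "c \<in> C" "w = cyc_next n c \<or> w = cyc_next n (cyc_next n c)"
proof (cases "cyc_prev n w \<in> C")
  case True
  moreover have "w = cyc_next n (cyc_prev n w)" using assms(1) by simp
  ultimately show ?thesis by (intro that disjI1)
next
  case False
  have "cyc_prev n (cyc_prev n w) \<in> C"
    using cyc_next_or_prev_in_C[OF cyc_prev_less[OF assms(1)] False] assms by simp
  moreover have "w = cyc_next n (cyc_next n (cyc_prev n (cyc_prev n w)))"
    using assms(1) cyc_prev_less[OF assms(1)] by simp
  ultimately show ?thesis by (intro that disjI2)
qed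

lemma card_independent_complement_le:
  assumes F: "independent ({0..<n} - C) (cycle_edges n) F"
  shows "card F \<le> card C"
proof -
  have "\<exists>c. c \<in> C \<and> (w = cyc_next n c \<or> w = cyc_next n (cyc_next n c))" if "w \<in> F" for w
  proof -
    have "w < n" "w \<notin> C" using F that by (auto simp: independent_def)
    then show ?thesis by (rule complement_near_C) blast
  qed
  then have "\<forall>w\<in>F. \<exists>c. c \<in> C \<and> (w = cyc_next n c \<or> w = cyc_next n (cyc_next n c))" by blast
  (* Two vertices of F with the same anchor would be adjacent. *)
  then obtain anchor where anchor: "\<And>w. w \<in> F \<Longrightarrow> anchor w \<in> C"
    "\<And>w. w \<in> F \<Longrightarrow> w = cyc_next n (anchor w) \<or> w = cyc_next n (cyc_next n (anchor w))"
    by metis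
  have "inj_on anchor F"
  proof (rule inj_onI, rule ccontr)
    fix x y assume "x \<in> F" "y \<in> F" "anchor x = anchor y" "x \<noteq> y"
    then have "{x, y} = {cyc_next n (anchor x), cyc_next n (cyc_next n (anchor x))}"
      using anchor(2)[of x] anchor(2)[of y] by auto
    moreover have "{cyc_next n (anchor x), cyc_next n (cyc_next n (anchor x))} \<in> cycle_edges n"
      using anchor(1)[OF \<open>x \<in> F\<close>] C_subset by (intro cycle_edge_next cyc_next_less) auto
    ultimately have "{x, y} \<in> cycle_edges n" by simp
    moreover have "{x, y} \<subseteq> F" using \<open>x \<in> F\<close> \<open>y \<in> F\<close> by simp
    ultimately show False using F by (auto simp: independent_def)
  qed
  then show ?thesis using anchor(1) finite_C by (intro card_inj_on_le) auto
qed

lemma independent_cyc_next_image: "independent ({0..<n} - C) (cycle_edges n) (cyc_next n ` C)"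
  unfolding independent_def
proof (intro conjI ballI notI)
  show "cyc_next n ` C \<subseteq> {0..<n} - C"
    using C_subset cyc_next_notin_C by (auto simp: cyc_next_C_less)
  fix e assume e: "e \<in> cycle_edges n" "e \<subseteq> cyc_next n ` C"
  then obtain j where j: "j < n" "e = {j, cyc_next n j}" by (auto simp: cycle_edges_eq)
  with e(2) obtain c c' where "c \<in> C" "j = cyc_next n c" "c' \<in> C" "cyc_next n j = cyc_next n c'"
    by auto
  moreover from this have "j = c'" using j(1) C_subset cyc_next_inj by auto
  ultimately show False using cyc_next_notin_C by auto
qed

lemma independence_number_complement: "independence_number ({0..<n} - C) (cycle_edges n) = card C"
  by (rule independence_number_eqI[OF _ independent_cyc_next_image])
    (auto simp: card_image inj_on_cyc_next C_subset card_independent_complement_le)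

lemma complement_eq:
  "{0..<n} - C = cyc_next n ` C \<union> (\<lambda>c. cyc_next n (cyc_next n c)) ` {c \<in> C. cyc_next n (cyc_next n c) \<notin> C}"
  (is "_ = _ \<union> ?next2 ` ?D")
proof (intro equalityI subsetI)
  fix w assume w: "w \<in> {0..<n} - C"
  then have "w < n" "w \<notin> C" by auto
  then obtain c where c: "c \<in> C" "w = cyc_next n c \<or> w = ?next2 c"
    by (rule complement_near_C) auto
  from c(2) show "w \<in> cyc_next n ` C \<union> ?next2 ` ?D"
  proof
    assume "w = cyc_next n c"
    then have "w \<in> cyc_next n ` C" using c(1) by (rule image_eqI)
    then show ?thesis by (rule UnI1)
  next
    assume w2: "w = ?next2 c"
    with c(1) w have "c \<in> ?D" by simp
    with w2 have "w \<in> ?next2 ` ?D" by (rule image_eqI)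
    then show ?thesis by (rule UnI2)
  qed
next
  fix w assume "w \<in> cyc_next n ` C \<union> ?next2 ` ?D"
  then show "w \<in> {0..<n} - C"
  proof
    assume "w \<in> cyc_next n ` C"
    then obtain c where "w = cyc_next n c" "c \<in> C" ..
    then show ?thesis by (simp add: cyc_next_notin_C cyc_next_C_less)
  next
    assume "w \<in> ?next2 ` ?D"
    then obtain c where "w = ?next2 c" "c \<in> ?D" ..
    then show ?thesis by (simp add: cyc_next_C_less cyc_next_less)
  qed
qed

lemma card_complement: "n = 2 * card C + card {c \<in> C. cyc_next n (cyc_next n c) \<notin> C}"
proof -
  let ?D = "{c \<in> C. cyc_next n (cyc_next n c) \<notin> C}" and ?next2 = "\<lambda>c. cyc_next n (cyc_next n c)"
  have "cyc_next n c \<noteq> ?next2 d" if "c \<in> C" "d \<in> C" for c d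
  proof
    assume "cyc_next n c = ?next2 d"
    moreover have "c < n" using that C_subset by auto
    ultimately have "c = cyc_next n d"
      using cyc_next_inj[of c n "cyc_next n d"] that by (simp add: cyc_next_C_less)
    then show False using that cyc_next_notin_C by blast
  qed
  then have "cyc_next n ` C \<inter> ?next2 ` ?D = {}" by blast
  moreover have "?D \<subseteq> {0..<n}" "cyc_next n ` ?D \<subseteq> {0..<n}"
    using C_subset by (auto simp: cyc_next_C_less)
  then have "inj_on ?next2 ?D"
    using comp_inj_on[OF inj_on_cyc_next inj_on_cyc_next] by (simp add: o_def)
  ultimately have "card ({0..<n} - C) = card C + card ?D"
    unfolding complement_eq using finite_C C_subset
    by (simp add: card_Un_disjoint card_image inj_on_cyc_next)
  moreover have "card ({0..<n} - C) = n - card C" using C_subset finite_C by (simp add: card_Diff_subset)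
  ultimately show ?thesis using card_C_le by linarith
qed

lemma induced_perfect_matching_complement:
  assumes "\<forall>c\<in>C. cyc_next n (cyc_next n c) \<notin> C"
  shows "induced_perfect_matching ({0..<n} - C) (cycle_edges n)"
  unfolding induced_perfect_matching_def
proof
  fix w assume w: "w \<in> {0..<n} - C"
  have "cyc_next n w \<noteq> cyc_prev n w" using w three_le by (auto simp: cyc_next_def cyc_prev_def)
  moreover have "cyc_next n w \<in> C \<longleftrightarrow> cyc_prev n w \<notin> C"
    using cyc_next_or_prev_in_C[of w] assms w cyc_prev_less[of w n] by force
  ultimately consider "cyc_prev n w \<in> {0..<n} - C" "cyc_next n w \<notin> {0..<n} - C"
    | "cyc_next n w \<in> {0..<n} - C" "cyc_prev n w \<notin> {0..<n} - C"
    using w by (auto simp: cyc_next_less cyc_prev_less)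
  then show "\<exists>!u. u \<in> {0..<n} - C \<and> {u, w} \<in> cycle_edges n"
  proof cases
    case 1
    then show ?thesis using w by (intro ex1I[of _ "cyc_prev n w"]) (auto simp: cycle_edge_iff)
  next
    case 2
    then show ?thesis using w by (intro ex1I[of _ "cyc_next n w"]) (auto simp: cycle_edge_iff)
  qed
qed

lemma indep_alt_sum_complement:
  "indep_alt_sum ({0..<n} - C) (cycle_edges n) = (if 3 * card C = n then (-1) ^ card C else 0)"
proof (cases "\<exists>c\<in>C. cyc_next n (cyc_next n c) \<in> C")
  case True
  then obtain c where c: "c \<in> C" "cyc_next n (cyc_next n c) \<in> C" by blast
  then have "{c \<in> C. cyc_next n (cyc_next n c) \<notin> C} \<subset> C" by blast
  then have "card {c \<in> C. cyc_next n (cyc_next n c) \<notin> C} < card C"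
    by (rule psubset_card_mono[OF finite_C])
  then have "3 * card C \<noteq> n" using card_complement by linarith
  moreover have "indep_alt_sum ({0..<n} - C) (cycle_edges n) = 0"
  proof (rule indep_alt_sum_isolated_vertex)
    have "c < n" using c C_subset by auto
    then show "cyc_next n c \<in> {0..<n} - C" using cyc_next_notin_C[OF c(1)] cyc_next_less by auto
    show "\<forall>u\<in>{0..<n} - C. {u, cyc_next n c} \<notin> cycle_edges n"
      using c \<open>c < n\<close> by (auto simp: cycle_edge_iff)
  qed (use simple_cycle in auto)
  ultimately show ?thesis by simp
next
  case False
  then have "{c \<in> C. cyc_next n (cyc_next n c) \<notin> C} = C" by blast
  then have three_card: "3 * card C = n" using card_complement by simp
  have "indep_alt_sum ({0..<n} - C) (cycle_edges n) = (-1) ^ (card ({0..<n} - C) div 2)"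
    using simple_cycle induced_perfect_matching_complement False
    by (intro indep_alt_sum_perfect_matching) auto
  moreover have "card ({0..<n} - C) = 2 * card C"
    using C_subset finite_C three_card by (simp add: card_Diff_subset)
  ultimately show ?thesis using three_card by simp
qed

lemma pseudo_gorenstein_star_suspension_iff:
  "pseudo_gorenstein_star ({0..<n} \<union> {n}) (suspension_edges n C) \<longleftrightarrow>
    (-1) ^ max (n div 2) (card C + 1) *
      (cycle_alt_sum n - (if 3 * card C = n then (-1) ^ card C else 0)) = (1::int)"
proof -
  have "{0..<n} \<union> {n} = insert n {0..<n}" by auto
  moreover have "\<forall>e\<in>cycle_edges n. card e = 2 \<and> e \<subseteq> {0..<n}"
    using simple_cycle cycle_edges_subset by auto
  ultimately show ?thesis
    unfolding suspension_edges_def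
    by (simp add: pseudo_gorenstein_star_iff_indep_alt_sum independence_number_cone
        indep_alt_sum_cone C_subset independence_number_cycle independence_number_complement
        indep_alt_sum_cycle three_le indep_alt_sum_complement)
qed

end

lemma less_12_cases: "(r::nat) < 12 \<Longrightarrow> r \<in> {0, 1, 2, 3, 4, 5, 6, 7, 8, 9, 10, 11}"
  by (simp add: less_Suc_eq numeral_eq_Suc)

lemma neg_one_power_div_2_mod_12: "(-1::int) ^ (n div 2) = (-1) ^ (n mod 12 div 2)"
proof -
  have "n div 2 = 6 * (n div 12) + n mod 12 div 2" by presburger
  then show ?thesis by (simp add: power_add power_mult)
qed

lemma neg_one_power_div_3_mod_12: "(-1::int) ^ (n div 3) = (-1) ^ (n mod 12 div 3)"
proof -
  have "n div 3 = 4 * (n div 12) + n mod 12 div 3" by presburger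
  then show ?thesis by (simp add: power_add power_mult)
qed

lemma cycle_alt_sum_mod_12: "cycle_alt_sum n = cycle_alt_sum (n mod 12)"
  by (simp add: cycle_alt_sum_def mod_mod_cancel)

lemma sign_condition_card_half:
  "(-1::int) ^ (n div 2 + 1) * cycle_alt_sum n = 1 \<longleftrightarrow> n mod 12 \<in> {4, 7, 8, 11}"
  unfolding power_add neg_one_power_div_2_mod_12[of n] cycle_alt_sum_mod_12[of n]
  using less_12_cases[of "n mod 12"] by (auto simp: cycle_alt_sum_def)

lemma sign_condition_card_third:
  assumes "n mod 3 = 0"
  shows "(-1::int) ^ (n div 2) * (cycle_alt_sum n - (-1) ^ (n div 3)) = 1 \<longleftrightarrow> n mod 12 \<in> {0, 3}"
proof -
  have "n mod 12 mod 3 = 0" using assms by (simp add: mod_mod_cancel)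
  then show ?thesis
    unfolding neg_one_power_div_2_mod_12[of n] neg_one_power_div_3_mod_12[of n]
      cycle_alt_sum_mod_12[of n]
    using less_12_cases[of "n mod 12"] by (auto simp: cycle_alt_sum_def)
qed

lemma sign_condition_card_other:
  "(-1::int) ^ (n div 2) * cycle_alt_sum n = 1 \<longleftrightarrow> n mod 12 \<in> {1, 2, 5, 10}"
  unfolding neg_one_power_div_2_mod_12[of n] cycle_alt_sum_mod_12[of n]
  using less_12_cases[of "n mod 12"] by (auto simp: cycle_alt_sum_def)

lemma sign_condition_iff_mod_12:
  fixes n K :: nat
  assumes "4 \<le> n" "K \<le> n div 2"
  shows "(-1::int) ^ max (n div 2) (K + 1) * (cycle_alt_sum n - (if 3 * K = n then (-1) ^ K else 0)) = 1
    \<longleftrightarrow> (n mod 12 \<in> {0, 3} \<and> K = nat \<lceil>real n / 3\<rceil>) \<or>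
      (n mod 12 \<in> {4, 7, 8, 11} \<and> K = n div 2) \<or> (n mod 12 \<in> {1, 2, 5, 10} \<and> K \<noteq> n div 2)"
proof -
  have third: "K = nat \<lceil>real n / 3\<rceil> \<longleftrightarrow> 3 * K = n" if "n mod 12 \<in> {0, 3}"
  proof -
    have "n mod 3 = n mod 12 mod 3" by (simp add: mod_mod_cancel)
    with that have "n mod 3 = 0" by auto
    then obtain m where "n = 3 * m" by (auto elim: dvdE)
    then show ?thesis by simp
  qed
  consider "K = n div 2" | "3 * K = n" | "K \<noteq> n div 2" "3 * K \<noteq> n" by blast
  then show ?thesis
  proof cases
    case 1
    then have "3 * K \<noteq> n" "max (n div 2) (K + 1) = n div 2 + 1" using assms(1) by presburger+
    then show ?thesis using sign_condition_card_half[of n] 1 third by auto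
  next
    case 2
    then have "K \<noteq> n div 2" "max (n div 2) (K + 1) = n div 2" "K = n div 3" "n mod 3 = 0"
      using assms by presburger+
    moreover have "n mod 12 \<notin> {1, 2, 4, 5, 7, 8, 10, 11}" using \<open>n mod 3 = 0\<close> by auto presburger+
    ultimately show ?thesis using sign_condition_card_third[of n] 2 third by auto
  next
    case 3
    then have "max (n div 2) (K + 1) = n div 2" using assms(2) by simp
    then show ?thesis using sign_condition_card_other[of n] 3 third by auto
  qed
qed

theorem corollary6p4:
  fixes n :: nat and C :: "nat set"
  assumes "n \<ge> 4"
    and "maximal_independent {0..<n} (cycle_edges n) C"
  shows "pseudo_gorenstein_star ({0..<n} \<union> {n}) (suspension_edges n C) \<longleftrightarrow>
     ((n mod 12 \<in> {0, 3} \<and> card C = nat \<lceil>real n / 3\<rceil>) \<or>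
      (n mod 12 \<in> {4, 7, 8, 11} \<and> card C = n div 2) \<or>
      (n mod 12 \<in> {1, 2, 5, 10} \<and> card C \<noteq> n div 2))"
proof -
  interpret cycle_maximal_independent n C
    using assms by unfold_locales auto
  show ?thesis
    unfolding pseudo_gorenstein_star_suspension_iff
    using sign_condition_iff_mod_12[OF assms(1) card_C_le] .
qed

end
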